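(* Let $\mathrm{X}=(X_n)_{n\ge1}$ be a sequence of random variables in $\mathbb{T}$, each distributed according to Lebesgue measure (no assumption on their joint law), and let $\mathrm{r}=(r_n)_{n\ge1}$ be a sequence of reals in $(0,1]$. Let $G$ be a nonempty compact subset of $\mathbb{T}$ and let $g$ be a doubling gauge function with $P^g(G)<\infty$. Then: (1) if $\sum_{n=1}^\infty \frac{r_n}{g(r_n)}<\infty$, then almost surely $\mathcal{E}(\mathrm{X},\mathrm{r})\cap G=\emptyset$; (2) for any doubling gauge function $h$, if $\sum_{n=1}^\infty\frac{h(r_n)r_n}{g(r_n)}<\infty$, then almost surely $\mathcal{H}^h(\mathcal{E}(\mathrm{X},\mathrm{r})\cap G)=0$.
   Context: $\mathbb{T}=\mathbb{R}/\mathbb{Z}$ with quotient distance $d$. $\mathcal{E}(\mathrm{X},\mathrm{r})=\{\xi\in\mathbb{T}: d(\xi,X_n)<r_n\text{ for infinitely many }n\ge1\}$. A gauge function is a nondecreasing right-continuous function on $[0,\infty)$ vanishing at zero and only at zero; it is doubling if $g(2r)\le Cg(r)$ for all $r>0$ and some $C>0$. $\mathcal{H}^h$ is the Hausdorff $h$-measure. The packing premeasure is $P^g(E)=\lim_{\delta\downarrow0}P^g_\delta(E)$, where $P^g_\delta(E)=\sup\sum_n g(\mathrm{diam}\,B_n)$, the supremum being over all sequences of disjoint closed balls (arcs) centered in $E$ with diameter less than $\delta$. *)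

theory Defs
  imports "HOL-Probability.Probability"
begin

text \<open>The circle T = R/Z is represented by the fundamental domain [0,1) of reals,
  equipped with the quotient distance (distance of x - y to the nearest integer).\<close>

definition torus :: "real set" where
  "torus = {0..<1}"

definition tdist :: "real \<Rightarrow> real \<Rightarrow> real" where
  "tdist x y = \<bar>x - y - of_int (round (x - y))\<bar>"

definition tdiam :: "real set \<Rightarrow> real" where
  "tdiam U = Sup (insert 0 {tdist x y | x y. x \<in> U \<and> y \<in> U})"

definition tcball :: "real \<Rightarrow> real \<Rightarrow> real set" where
  "tcball c \<rho> = {x \<in> torus. tdist x c \<le> \<rho>}"

text \<open>A subset of T (given by representatives in [0,1)) is compact in R/Z iff
  its full preimage under the quotient map R \<rightarrow> R/Z is closed.\<close>
definition torus_compact :: "real set \<Rightarrow> bool" where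
  "torus_compact G \<longleftrightarrow> G \<subseteq> torus \<and> closed {x + real_of_int k | x k. x \<in> G}"

definition gauge :: "(real \<Rightarrow> real) \<Rightarrow> bool" where
  "gauge g \<longleftrightarrow> mono_on {0..} g \<and> (\<forall>x\<ge>0. continuous (at_right x) g)
      \<and> g 0 = 0 \<and> (\<forall>x>0. g x \<noteq> 0)"

definition doubling :: "(real \<Rightarrow> real) \<Rightarrow> bool" where
  "doubling g \<longleftrightarrow> (\<exists>C>0. \<forall>r>0. g (2 * r) \<le> C * g r)"

definition limsup_set :: "(nat \<Rightarrow> real) \<Rightarrow> (nat \<Rightarrow> real) \<Rightarrow> real set" where
  "limsup_set x r = {\<xi> \<in> torus. infinite {n. tdist \<xi> (x n) < r n}}"

definition hausdorff_measure :: "(real \<Rightarrow> real) \<Rightarrow> real set \<Rightarrow> ennreal" where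
  "hausdorff_measure h E =
     (SUP \<delta>\<in>{0<..}. INF U \<in> {U :: nat \<Rightarrow> real set.
                 (\<forall>i. U i \<subseteq> torus \<and> tdiam (U i) \<le> \<delta>) \<and> E \<subseteq> (\<Union>i. U i)}.
        (\<Sum>i. ennreal (h (tdiam (U i)))))"

text \<open>P^g_delta: supremum over (finite or countable) sequences of disjoint closed balls
  centred in E with diameter less than delta.\<close>
definition packing_pre_delta :: "(real \<Rightarrow> real) \<Rightarrow> real \<Rightarrow> real set \<Rightarrow> ennreal" where
  "packing_pre_delta g \<delta> E =
     (SUP (I, c, \<rho>) \<in> {(I :: nat set, c :: nat \<Rightarrow> real, \<rho> :: nat \<Rightarrow> real).
              (\<forall>n\<in>I. c n \<in> E \<and> \<rho> n > 0 \<and> tdiam (tcball (c n) (\<rho> n)) < \<delta>) \<and>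
              (\<forall>m\<in>I. \<forall>n\<in>I. m \<noteq> n \<longrightarrow> tcball (c m) (\<rho> m) \<inter> tcball (c n) (\<rho> n) = {})}.
        (\<Sum>n. if n \<in> I then ennreal (g (tdiam (tcball (c n) (\<rho> n)))) else 0))"

definition packing_premeasure :: "(real \<Rightarrow> real) \<Rightarrow> real set \<Rightarrow> ennreal" where
  "packing_premeasure g E = (INF \<delta>\<in>{0<..}. packing_pre_delta g \<delta> E)"

end

theory Submission
  imports Defs
begin

text \<open>If \<open>P\<^sup>g\<^sub>\<delta>(G) = P < \<infinity>\<close>, a \<open>\<rho>\<close>-separated subset of \<open>G\<close> has at most \<open>P / g(\<rho>)\<close>
  points, so a maximal one is a net whose \<open>3\<rho>\<close>-arcs cover the \<open>\<rho>\<close>-neighbourhood of \<open>G\<close>,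
  and that neighbourhood has Lebesgue measure \<open>O(\<rho> / g(\<rho>))\<close>. As \<open>X\<^sub>n\<close> is uniform, the event
  \<open>B\<^sub>n\<close> that the ball of radius \<open>r\<^sub>n\<close> around \<open>X\<^sub>n\<close> meets \<open>G\<close> has probability
  \<open>O(r\<^sub>n / g(r\<^sub>n))\<close>, and only these balls matter for \<open>E(X, r) \<inter> G\<close>. In (1), Borel--Cantelli
  shows that almost surely only finitely many \<open>B\<^sub>n\<close> occur. In (2), the doubling property of
  \<open>h\<close> makes \<open>\<Sum> P(B\<^sub>n) h(2r\<^sub>n)\<close> finite, so almost surely the sum of \<open>h(2r\<^sub>n)\<close> over the
  occurring \<open>B\<^sub>n\<close> is finite, and the tails of these balls cover \<open>E(X, r) \<inter> G\<close> at
  arbitrarily small \<open>h\<close>-cost.\<close>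

lemma tdist_le_abs_diff: "tdist x y \<le> \<bar>x - y - of_int k\<bar>"
  unfolding tdist_def by (rule round_diff_minimal)

lemma tdist_nonneg: "0 \<le> tdist x y"
  by (simp add: tdist_def)

lemma tdist_self [simp]: "tdist x x = 0"
  by (simp add: tdist_def)

lemma tdist_less_iff: "tdist x y < s \<longleftrightarrow> (\<exists>k::int. \<bar>x - y - of_int k\<bar> < s)"
  by (metis tdist_def tdist_le_abs_diff le_less_trans)

lemma tdist_commute: "tdist x y = tdist y x"
proof -
  have "tdist y x \<le> tdist x y" for x y
    using tdist_le_abs_diff[of y x "- round (x - y)"] by (simp add: tdist_def abs_minus_commute)
  then show ?thesis by (meson antisym)
qed

lemma tdist_triangle: "tdist x z \<le> tdist x y + tdist y z"
proof -
  have "tdist x z \<le> \<bar>x - z - of_int (round (x - y) + round (y - z))\<bar>"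
    by (rule tdist_le_abs_diff)
  also have "\<dots> \<le> tdist x y + tdist y z"
    unfolding tdist_def by simp
  finally show ?thesis .
qed

lemma tdist_le_half: "tdist x y \<le> 1/2"
  unfolding tdist_def using of_int_round_ge[of "x - y"] of_int_round_le[of "x - y"] by linarith

lemma bdd_above_tdist_image: "bdd_above (insert 0 {tdist x y | x y. x \<in> U \<and> y \<in> U})"
  by (rule bdd_aboveI[of _ "1/2"]) (use tdist_le_half in fastforce)

lemma tdiam_nonneg: "0 \<le> tdiam U"
  unfolding tdiam_def by (rule cSup_upper[OF _ bdd_above_tdist_image]) simp

lemma tdist_le_tdiam: "x \<in> U \<Longrightarrow> y \<in> U \<Longrightarrow> tdist x y \<le> tdiam U"
  unfolding tdiam_def by (rule cSup_upper[OF _ bdd_above_tdist_image]) auto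

lemma tdiam_le: "0 \<le> b \<Longrightarrow> (\<And>x y. x \<in> U \<Longrightarrow> y \<in> U \<Longrightarrow> tdist x y \<le> b) \<Longrightarrow> tdiam U \<le> b"
  unfolding tdiam_def by (rule cSup_least) auto

lemma tdiam_tball_le:
  assumes "\<And>y. y \<in> U \<Longrightarrow> tdist y c \<le> \<rho>" and "0 \<le> \<rho>"
  shows "tdiam U \<le> 2 * \<rho>"
proof (rule tdiam_le)
  fix y z assume "y \<in> U" "z \<in> U"
  then have "tdist y c \<le> \<rho>" "tdist z c \<le> \<rho>"
    using assms(1) by auto
  then show "tdist y z \<le> 2 * \<rho>"
    using tdist_triangle[of y z c] tdist_commute[of c z] by linarith
qed (use assms(2) in simp)

lemma tdiam_tcball_ge:
  assumes "c \<in> torus" "0 < \<rho>" "\<rho> < 1/2"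
  shows "\<rho> \<le> tdiam (tcball c \<rho>)"
proof -
  define y where "y = (if c + \<rho> < 1 then c + \<rho> else c + \<rho> - 1)"
  have "round (y - c) = (if c + \<rho> < 1 then 0 else -1)"
    using assms by (intro round_unique') (auto simp: y_def)
  then have "tdist y c = \<rho>"
    using assms by (simp add: tdist_def y_def)
  moreover have "y \<in> torus"
    using assms by (auto simp: y_def torus_def)
  ultimately have "y \<in> tcball c \<rho>" "c \<in> tcball c \<rho>"
    using assms by (auto simp: tcball_def)
  then show ?thesis
    using tdist_le_tdiam \<open>tdist y c = \<rho>\<close> by metis
qed

lemma tcball_disjoint:
  assumes "2 * \<rho> < tdist a b"
  shows "tcball a \<rho> \<inter> tcball b \<rho> = {}"
proof -
  have False if "tdist x a \<le> \<rho>" "tdist x b \<le> \<rho>" for x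
    using that assms tdist_triangle[of a b x] tdist_commute[of a x] by linarith
  then show ?thesis
    unfolding tcball_def by blast
qed

definition tnbhd :: "real set \<Rightarrow> real \<Rightarrow> real set" where
  "tnbhd A s = {x. \<exists>\<xi>\<in>A. tdist \<xi> x < s}"

lemma open_tnbhd: "open (tnbhd A s)"
proof -
  have "tnbhd A s = (\<Union>\<xi>\<in>A. \<Union>k::int. ball (\<xi> - of_int k) s)"
    unfolding tnbhd_def
    by (auto simp: tdist_less_iff dist_real_def abs_minus_commute algebra_simps) blast+
  then show ?thesis by auto
qed

lemma emeasure_tarc_le:
  assumes "c \<in> torus" "0 \<le> s"
  shows "emeasure lborel (tnbhd {c} s \<inter> torus) \<le> ennreal (6 * s)"
proof -
  let ?A = "\<lambda>k::int. {c + of_int k - s <..< c + of_int k + s}"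
  have "tnbhd {c} s \<inter> torus \<subseteq> (\<Union>k\<in>{-1,0,1}. ?A k)"
  proof
    fix x assume x: "x \<in> tnbhd {c} s \<inter> torus"
    let ?k = "round (x - c)"
    have "\<bar>x - c - of_int ?k\<bar> < s"
      using x tdist_commute[of c x] by (simp add: tnbhd_def tdist_def)
    moreover have "?k \<in> {-1,0,1}"
    proof -
      have "-1 < x - c" "x - c < 1"
        using x assms(1) by (auto simp: torus_def)
      then have "-2 < ?k" "?k < 2"
        using of_int_round_ge[of "x - c"] of_int_round_le[of "x - c"] by linarith+
      then show ?thesis by auto
    qed
    ultimately show "x \<in> (\<Union>k\<in>{-1,0,1}. ?A k)" by auto
  qed
  then have "emeasure lborel (tnbhd {c} s \<inter> torus) \<le> emeasure lborel (\<Union>k\<in>{-1,0,1}. ?A k)"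
    by (rule emeasure_mono) auto
  also have "\<dots> \<le> (\<Sum>k\<in>{-1,0,1}. emeasure lborel (?A k))"
    by (rule emeasure_subadditive_finite) auto
  also have "\<dots> = ennreal (6 * s)"
    using assms(2) ennreal_mult[of 3 "2 * s"] by (simp add: ennreal_plus[symmetric] del: ennreal_plus)
  finally show ?thesis .
qed

lemma tnbhd_subset_tnbhd_net:
  assumes "\<And>x. x \<in> G \<Longrightarrow> \<exists>c\<in>F. tdist x c \<le> d"
  shows "tnbhd G \<rho> \<subseteq> tnbhd F (d + \<rho>)"
proof
  fix x assume "x \<in> tnbhd G \<rho>"
  then obtain \<xi> where \<xi>: "\<xi> \<in> G" "tdist \<xi> x < \<rho>"
    by (auto simp: tnbhd_def)
  then obtain c where c: "c \<in> F" "tdist \<xi> c \<le> d"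
    using assms by blast
  have "tdist c x < d + \<rho>"
    using \<xi> c tdist_triangle[of c x \<xi>] tdist_commute[of c \<xi>] by linarith
  then show "x \<in> tnbhd F (d + \<rho>)"
    using c by (auto simp: tnbhd_def)
qed

lemma emeasure_tnbhd_finite_le:
  assumes "finite F" "F \<subseteq> torus" "0 \<le> s"
  shows "emeasure lborel (tnbhd F s \<inter> torus) \<le> ennreal (real (card F) * (6 * s))"
proof -
  have arcs: "tnbhd F s \<inter> torus = (\<Union>c\<in>F. tnbhd {c} s \<inter> torus)"
    by (auto simp: tnbhd_def)
  have measurable: "tnbhd {c} s \<inter> torus \<in> sets lborel" for c
    by (auto simp: torus_def open_tnbhd)
  have "emeasure lborel (tnbhd F s \<inter> torus) \<le> (\<Sum>c\<in>F. emeasure lborel (tnbhd {c} s \<inter> torus))"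
    unfolding arcs using measurable assms(1) by (intro emeasure_subadditive_finite) auto
  also have "\<dots> \<le> (\<Sum>c\<in>F. ennreal (6 * s))"
    using assms by (intro sum_mono emeasure_tarc_le) auto
  also have "\<dots> = ennreal (real (card F) * (6 * s))"
    using assms(3) by (simp add: ennreal_mult ennreal_of_nat_eq_real_of_nat)
  finally show ?thesis .
qed

lemma gauge_mono: "gauge g \<Longrightarrow> 0 \<le> a \<Longrightarrow> a \<le> b \<Longrightarrow> g a \<le> g b"
  unfolding gauge_def by (auto intro: mono_onD)

lemma gauge_pos: "gauge g \<Longrightarrow> 0 < a \<Longrightarrow> 0 < g a"
  using gauge_mono[of g 0 a] unfolding gauge_def by force

lemma gauge_nonneg: "gauge g \<Longrightarrow> 0 \<le> a \<Longrightarrow> 0 \<le> g a"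
  using gauge_mono[of g 0 a] unfolding gauge_def by force


definition tseparated :: "real \<Rightarrow> real set \<Rightarrow> bool" where
  "tseparated \<rho> F \<longleftrightarrow> (\<forall>x\<in>F. \<forall>y\<in>F. x \<noteq> y \<longrightarrow> 2 * \<rho> < tdist x y)"

lemma finite_packing_le_packing_pre_delta:
  fixes I :: "nat set"
  assumes "finite I" and "\<forall>n\<in>I. c n \<in> G \<and> \<rho> n > 0 \<and> tdiam (tcball (c n) (\<rho> n)) < \<delta>"
    and "\<forall>m\<in>I. \<forall>n\<in>I. m \<noteq> n \<longrightarrow> tcball (c m) (\<rho> m) \<inter> tcball (c n) (\<rho> n) = {}"
  shows "(\<Sum>n\<in>I. ennreal (g (tdiam (tcball (c n) (\<rho> n))))) \<le> packing_pre_delta g \<delta> G"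
proof -
  have "(\<Sum>n\<in>I. ennreal (g (tdiam (tcball (c n) (\<rho> n)))))
      = (\<Sum>n. if n \<in> I then ennreal (g (tdiam (tcball (c n) (\<rho> n)))) else 0)"
    by (subst suminf_finite[OF assms(1)]) auto
  also have "\<dots> \<le> packing_pre_delta g \<delta> G"
    unfolding packing_pre_delta_def
    by (rule SUP_upper2[of "(I, c, \<rho>)"]) (use assms(2,3) in simp_all)
  finally show ?thesis .
qed

lemma card_separated_le_packing_pre_delta:
  assumes G: "G \<subseteq> torus" and g: "gauge g" and \<rho>: "0 < \<rho>" "\<rho> < 1/2" "2 * \<rho> < \<delta>"
    and F: "finite F" "F \<subseteq> G" "tseparated \<rho> F"
  shows "ennreal (real (card F) * g \<rho>) \<le> packing_pre_delta g \<delta> G"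
proof -
  obtain e where e: "bij_betw e {..<card F} F"
    using bij_betw_from_nat_into_finite[OF F(1)] by blast
  let ?I = "{..<card F}"
  have eF: "e n \<in> F" if "n \<in> ?I" for n
    using e that by (auto simp: bij_betw_def)
  have admissible: "\<forall>n\<in>?I. e n \<in> G \<and> \<rho> > 0 \<and> tdiam (tcball (e n) \<rho>) < \<delta>"
  proof
    fix n assume "n \<in> ?I"
    have "tdiam (tcball (e n) \<rho>) \<le> 2 * \<rho>"
      using \<rho> by (intro tdiam_tball_le[of _ "e n"]) (auto simp: tcball_def)
    then show "e n \<in> G \<and> \<rho> > 0 \<and> tdiam (tcball (e n) \<rho>) < \<delta>"
      using eF[OF \<open>n \<in> ?I\<close>] F(2) \<rho> by auto
  qed
  have disjoint: "\<forall>m\<in>?I. \<forall>n\<in>?I. m \<noteq> n \<longrightarrow> tcball (e m) \<rho> \<inter> tcball (e n) \<rho> = {}"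
  proof (intro ballI impI)
    fix m n assume "m \<in> ?I" "n \<in> ?I" "m \<noteq> n"
    then have "e m \<noteq> e n" "e m \<in> F" "e n \<in> F"
      using e eF by (auto simp: bij_betw_def inj_on_def)
    then show "tcball (e m) \<rho> \<inter> tcball (e n) \<rho> = {}"
      using F(3) by (intro tcball_disjoint) (auto simp: tseparated_def)
  qed
  have "ennreal (real (card F) * g \<rho>) = (\<Sum>n\<in>?I. ennreal (g \<rho>))"
    using gauge_nonneg[OF g, of \<rho>] \<rho> by (simp add: ennreal_mult ennreal_of_nat_eq_real_of_nat)
  also have "\<dots> \<le> (\<Sum>n\<in>?I. ennreal (g (tdiam (tcball (e n) \<rho>))))"
  proof (rule sum_mono)
    fix n assume "n \<in> ?I"
    then have "\<rho> \<le> tdiam (tcball (e n) \<rho>)"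
      using eF F(2) G \<rho> by (intro tdiam_tcball_ge) auto
    then show "ennreal (g \<rho>) \<le> ennreal (g (tdiam (tcball (e n) \<rho>)))"
      using gauge_mono[OF g] \<rho> by (auto intro: ennreal_leI)
  qed
  also have "\<dots> \<le> packing_pre_delta g \<delta> G"
    using finite_packing_le_packing_pre_delta[of ?I e G "\<lambda>_. \<rho>" \<delta> g] admissible disjoint by simp
  finally show ?thesis .
qed

lemma separated_net_exists:
  assumes card_bound: "\<And>F. finite F \<Longrightarrow> F \<subseteq> G \<Longrightarrow> tseparated \<rho> F \<Longrightarrow> card F \<le> K"
    and "0 \<le> \<rho>"
  obtains F where "finite F" "F \<subseteq> G" "tseparated \<rho> F" "\<And>x. x \<in> G \<Longrightarrow> \<exists>c\<in>F. tdist x c \<le> 2 * \<rho>"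
proof -
  let ?S = "{card F | F. finite F \<and> F \<subseteq> G \<and> tseparated \<rho> F}"
  have fin: "finite ?S"
    by (rule finite_subset[of _ "{..K}"]) (use card_bound in auto)
  have "card {} \<in> ?S"
    by (auto simp: tseparated_def intro!: exI[of _ "{}"])
  then have "Max ?S \<in> ?S"
    using fin by (intro Max_in) auto
  then obtain F where F: "Max ?S = card F" "finite F" "F \<subseteq> G" "tseparated \<rho> F"
    by blast
  have "\<exists>c\<in>F. tdist x c \<le> 2 * \<rho>" if x: "x \<in> G" for x
  proof (rule ccontr)
    assume "\<not> ?thesis"
    then have far: "\<forall>c\<in>F. 2 * \<rho> < tdist x c"
      by (auto simp: not_le)
    then have "x \<notin> F"
      using assms(2) by force
    moreover have "tseparated \<rho> (insert x F)"
      using F(4) far tdist_commute unfolding tseparated_def by auto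
    then have "card (insert x F) \<le> Max ?S"
      using F x fin by (intro Max_ge) blast+
    ultimately show False
      using F by simp
  qed
  then show ?thesis
    using F that by blast
qed

lemma emeasure_tnbhd_le_packing_pre_delta:
  assumes P: "packing_pre_delta g \<delta> G = ennreal P" "0 \<le> P" and G: "G \<subseteq> torus" and g: "gauge g"
    and \<rho>: "0 < \<rho>" "\<rho> < 1/2" "2 * \<rho> < \<delta>"
  shows "emeasure lborel (tnbhd G \<rho> \<inter> torus) \<le> ennreal (18 * P * \<rho> / g \<rho>)"
proof -
  have g\<rho>: "0 < g \<rho>"
    using gauge_pos[OF g \<rho>(1)] .
  have card_le: "real (card F) \<le> P / g \<rho>" if "finite F" "F \<subseteq> G" "tseparated \<rho> F" for F
  proof -
    have "ennreal (real (card F) * g \<rho>) \<le> ennreal P"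
      using card_separated_le_packing_pre_delta[OF G g \<rho> that] P by simp
    then have "real (card F) * g \<rho> \<le> P"
      using g\<rho> P(2) by (subst (asm) ennreal_le_iff) auto
    then show ?thesis
      using g\<rho> by (simp add: pos_le_divide_eq)
  qed
  obtain F where F: "finite F" "F \<subseteq> G" "tseparated \<rho> F" "\<And>x. x \<in> G \<Longrightarrow> \<exists>c\<in>F. tdist x c \<le> 2 * \<rho>"
  proof (rule separated_net_exists[of G \<rho> "nat \<lfloor>P / g \<rho>\<rfloor>"])
    show "card F \<le> nat \<lfloor>P / g \<rho>\<rfloor>" if "finite F" "F \<subseteq> G" "tseparated \<rho> F" for F
      using card_le[OF that] by linarith
  qed (use \<rho>(1) in auto)
  have "tnbhd G \<rho> \<subseteq> tnbhd F (2 * \<rho> + \<rho>)"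
    using F(4) by (rule tnbhd_subset_tnbhd_net)
  then have "emeasure lborel (tnbhd G \<rho> \<inter> torus) \<le> emeasure lborel (tnbhd F (3 * \<rho>) \<inter> torus)"
    by (intro emeasure_mono) (auto simp: torus_def open_tnbhd)
  also have "\<dots> \<le> ennreal (real (card F) * (6 * (3 * \<rho>)))"
    using F(1,2) G \<rho>(1) by (intro emeasure_tnbhd_finite_le) auto
  also have "\<dots> \<le> ennreal (18 * P * \<rho> / g \<rho>)"
  proof (rule ennreal_leI)
    have "real (card F) * (18 * \<rho>) \<le> P / g \<rho> * (18 * \<rho>)"
      using card_le[OF F(1-3)] \<rho> by (intro mult_right_mono) auto
    then show "real (card F) * (6 * (3 * \<rho>)) \<le> 18 * P * \<rho> / g \<rho>"
      by (simp add: mult_ac)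
  qed
  finally show ?thesis .
qed

lemma emeasure_tnbhd_bound:
  assumes "packing_premeasure g G < \<infinity>" and G: "G \<subseteq> torus" and g: "gauge g"
  obtains C \<rho>\<^sub>0 where "0 \<le> C" "0 < \<rho>\<^sub>0"
    "\<And>\<rho>. 0 < \<rho> \<Longrightarrow> \<rho> < \<rho>\<^sub>0 \<Longrightarrow> emeasure lborel (tnbhd G \<rho> \<inter> torus) \<le> ennreal (C * \<rho> / g \<rho>)"
proof -
  obtain \<delta> where \<delta>: "0 < \<delta>" "packing_pre_delta g \<delta> G < \<infinity>"
    using assms(1) unfolding packing_premeasure_def by (auto simp: INF_less_iff)
  define P where "P = enn2real (packing_pre_delta g \<delta> G)"
  have P: "packing_pre_delta g \<delta> G = ennreal P" "0 \<le> P"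
    using \<delta>(2) by (auto simp: P_def)
  then show ?thesis
  proof (intro that[of "18 * P" "min (1/2) (\<delta>/2)"])
    fix \<rho> assume "0 < \<rho>" "\<rho> < min (1/2) (\<delta>/2)"
    then show "emeasure lborel (tnbhd G \<rho> \<inter> torus) \<le> ennreal (18 * P * \<rho> / g \<rho>)"
      using emeasure_tnbhd_le_packing_pre_delta[OF P G g] by simp
  qed (use \<delta>(1) in auto)
qed

lemma emeasure_preimage_uniform:
  assumes X: "distributed M lborel X (indicator torus :: real \<Rightarrow> ennreal)" and A: "A \<in> sets borel"
  shows "emeasure M (X -` A \<inter> space M) = emeasure lborel (A \<inter> torus)"
proof -
  have "emeasure M (X -` A \<inter> space M) = (\<integral>\<^sup>+x. indicator torus x * indicator A x \<partial>lborel)"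
    using A by (intro distributed_emeasure[OF X]) simp
  also have "\<dots> = (\<integral>\<^sup>+x. indicator (A \<inter> torus) x \<partial>lborel)"
    by (intro nn_integral_cong) (auto simp: indicator_def)
  also have "\<dots> = emeasure lborel (A \<inter> torus)"
    using A by (intro nn_integral_indicator) (auto simp: torus_def)
  finally show ?thesis .
qed

lemma prob_hit_tnbhd_bound:
  assumes M: "prob_space M"
    and X: "\<And>n. distributed M lborel (X n) (indicator torus :: real \<Rightarrow> ennreal)"
    and G: "G \<subseteq> torus" and g: "gauge g" and P: "packing_premeasure g G < \<infinity>"
    and r: "\<And>n. 0 < r n" "r \<longlonglongrightarrow> 0"
  obtains C where "0 \<le> C"
    "\<forall>\<^sub>F n in sequentially. measure M (X n -` tnbhd G (r n) \<inter> space M) \<le> C * r n / g (r n)"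
proof -
  obtain C \<rho>\<^sub>0 where C: "0 \<le> C" "0 < \<rho>\<^sub>0"
    and bound: "\<And>\<rho>. 0 < \<rho> \<Longrightarrow> \<rho> < \<rho>\<^sub>0 \<Longrightarrow> emeasure lborel (tnbhd G \<rho> \<inter> torus) \<le> ennreal (C * \<rho> / g \<rho>)"
    using emeasure_tnbhd_bound[OF P G g] by blast
  have "\<forall>\<^sub>F n in sequentially. r n < \<rho>\<^sub>0"
    using order_tendstoD(2)[OF r(2) C(2)] .
  then have "\<forall>\<^sub>F n in sequentially. measure M (X n -` tnbhd G (r n) \<inter> space M) \<le> C * r n / g (r n)"
  proof eventually_elim
    case (elim n)
    have "emeasure M (X n -` tnbhd G (r n) \<inter> space M) \<le> ennreal (C * r n / g (r n))"
      using emeasure_preimage_uniform[OF X borel_open[OF open_tnbhd]] bound[OF r(1) elim] by simp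
    moreover have "0 \<le> C * r n / g (r n)"
      using C(1) r(1)[of n] gauge_pos[OF g r(1)[of n]] by simp
    ultimately show ?case
      unfolding measure_def by (intro enn2real_leI)
  qed
  then show ?thesis
    using that C(1) by blast
qed

text \<open>The nonnegative integral of \<open>\<Sum>n. w n * indicator (B n)\<close> is the finite sum
  \<open>\<Sum>n. prob (B n) * w n\<close>.\<close>

lemma (in prob_space) AE_summable_indicator_mult:
  assumes B [measurable]: "\<And>n. B n \<in> events" and w: "\<And>n. 0 \<le> w n"
    and summable: "summable (\<lambda>n. prob (B n) * w n)"
  shows "AE \<omega> in M. summable (\<lambda>n. indicator (B n) \<omega> * w n)"
proof -
  let ?f = "\<lambda>\<omega>. \<Sum>n. ennreal (w n) * indicator (B n) \<omega>"
  have "(\<integral>\<^sup>+\<omega>. ?f \<omega> \<partial>M) = (\<Sum>n. \<integral>\<^sup>+\<omega>. ennreal (w n) * indicator (B n) \<omega> \<partial>M)"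
    by (rule nn_integral_suminf) measurable
  also have "\<dots> = (\<Sum>n. ennreal (prob (B n) * w n))"
    using B w by (simp add: nn_integral_cmult_indicator emeasure_eq_measure ennreal_mult' mult.commute)
  also have "\<dots> = ennreal (\<Sum>n. prob (B n) * w n)"
    using summable w by (intro suminf_ennreal2) auto
  finally have "(\<integral>\<^sup>+\<omega>. ?f \<omega> \<partial>M) \<noteq> \<infinity>"
    by simp
  then have "AE \<omega> in M. ?f \<omega> \<noteq> \<infinity>"
    by (intro nn_integral_noteq_infinite) measurable
  then show ?thesis
  proof eventually_elim
    case (elim \<omega>)
    have "ennreal (w n) * indicator (B n) \<omega> = ennreal (indicator (B n) \<omega> * w n)" for n
      by (auto simp: indicator_def)
    then have "(\<Sum>n. ennreal (indicator (B n) \<omega> * w n)) \<noteq> \<top>"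
      using elim by simp
    then show ?case
      using w by (intro summable_suminf_not_top[rotated]) auto
  qed
qed

lemma LIMSEQ_zero_of_summable_bound:
  fixes r a :: "nat \<Rightarrow> real" and \<phi> :: "real \<Rightarrow> real"
  assumes "summable a" and bound: "\<And>n. \<phi> (r n) \<le> a n" and mono: "mono_on {0..} \<phi>"
    and pos: "\<And>t. 0 < t \<Longrightarrow> 0 < \<phi> t" and r: "\<And>n. 0 \<le> r n"
  shows "r \<longlonglongrightarrow> 0"
proof (rule order_tendstoI)
  fix \<epsilon> :: real assume "0 < \<epsilon>"
  have "\<forall>\<^sub>F n in sequentially. a n < \<phi> \<epsilon>"
    using order_tendstoD(2)[OF summable_LIMSEQ_zero[OF \<open>summable a\<close>] pos[OF \<open>0 < \<epsilon>\<close>]] .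
  then show "\<forall>\<^sub>F n in sequentially. r n < \<epsilon>"
  proof eventually_elim
    case (elim n)
    show ?case
    proof (rule ccontr)
      assume "\<not> r n < \<epsilon>"
      then have "\<phi> \<epsilon> \<le> \<phi> (r n)"
        using \<open>0 < \<epsilon>\<close> by (intro mono_onD[OF mono]) auto
      then show False
        using bound[of n] elim by simp
    qed
  qed
next
  fix a :: real assume "a < 0"
  then show "\<forall>\<^sub>F n in sequentially. a < r n"
    using r by (intro always_eventually allI) (meson less_le_trans)
qed

lemma limsup_set_eq_empty:
  assumes "\<forall>\<^sub>F n in sequentially. r n \<le> 0"
  shows "limsup_set x r = {}"
proof -
  obtain N where N: "\<And>n. N \<le> n \<Longrightarrow> r n \<le> 0"
    using assms by (auto simp: eventually_sequentially)
  have "{n. tdist \<xi> (x n) < r n} \<subseteq> {..<N}" for \<xi>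
  proof
    fix n assume "n \<in> {n. tdist \<xi> (x n) < r n}"
    then have "\<not> r n \<le> 0"
      using tdist_nonneg[of \<xi> "x n"] by simp
    then show "n \<in> {..<N}"
      using N[of n] by (auto simp: not_le[symmetric])
  qed
  then show ?thesis
    unfolding limsup_set_def using finite_subset by blast
qed

lemma limsup_set_inter_subset:
  "limsup_set x r \<inter> G \<subseteq> limsup_set x (\<lambda>n. if x n \<in> tnbhd G (r n) then r n else 0)"
proof
  fix \<xi> assume \<xi>: "\<xi> \<in> limsup_set x r \<inter> G"
  then have "infinite {n. tdist \<xi> (x n) < r n}" "\<xi> \<in> torus"
    by (auto simp: limsup_set_def)
  moreover have "{n. tdist \<xi> (x n) < r n} \<subseteq> {n. tdist \<xi> (x n) < (if x n \<in> tnbhd G (r n) then r n else 0)}"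
    using \<xi> by (auto simp: tnbhd_def)
  ultimately show "\<xi> \<in> limsup_set x (\<lambda>n. if x n \<in> tnbhd G (r n) then r n else 0)"
    unfolding limsup_set_def using infinite_super by blast
qed

lemma hausdorff_measure_mono:
  assumes "A \<subseteq> B"
  shows "hausdorff_measure h A \<le> hausdorff_measure h B"
  unfolding hausdorff_measure_def
proof (rule SUP_mono')
  fix \<delta> :: real
  show "(INF U \<in> {U. (\<forall>i. U i \<subseteq> torus \<and> tdiam (U i) \<le> \<delta>) \<and> A \<subseteq> (\<Union>i. U i)}. \<Sum>i. ennreal (h (tdiam (U i))))
      \<le> (INF U \<in> {U. (\<forall>i. U i \<subseteq> torus \<and> tdiam (U i) \<le> \<delta>) \<and> B \<subseteq> (\<Union>i. U i)}. \<Sum>i. ennreal (h (tdiam (U i))))"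
    using assms by (intro INF_superset_mono) auto
qed

lemma hausdorff_measure_eq_0I:
  assumes "\<And>\<delta> \<epsilon>. 0 < \<delta> \<Longrightarrow> 0 < \<epsilon> \<Longrightarrow> \<exists>U. (\<forall>i. U i \<subseteq> torus \<and> tdiam (U i) \<le> \<delta>) \<and> E \<subseteq> (\<Union>i. U i)
      \<and> (\<Sum>i. ennreal (h (tdiam (U i)))) \<le> ennreal \<epsilon>"
  shows "hausdorff_measure h E = 0"
proof -
  define H where "H \<delta> = (INF U \<in> {U. (\<forall>i. U i \<subseteq> torus \<and> tdiam (U i) \<le> \<delta>) \<and> E \<subseteq> (\<Union>i. U i)}.
    \<Sum>i. ennreal (h (tdiam (U i))))" for \<delta>
  have H_le: "H \<delta> \<le> ennreal \<epsilon>" if "0 < \<delta>" "0 < \<epsilon>" for \<delta> \<epsilon>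
  proof -
    from assms[OF that] obtain U where U: "(\<forall>i. U i \<subseteq> torus \<and> tdiam (U i) \<le> \<delta>) \<and> E \<subseteq> (\<Union>i. U i)
      \<and> (\<Sum>i. ennreal (h (tdiam (U i)))) \<le> ennreal \<epsilon>" ..
    show ?thesis
      unfolding H_def by (rule INF_lower2[of U]) (use U in simp_all)
  qed
  have "H \<delta> = 0" if "0 < \<delta>" for \<delta>
  proof -
    have "H \<delta> \<le> 0"
      by (rule ennreal_le_epsilon) (use H_le[OF that] in simp)
    then show ?thesis
      by simp
  qed
  moreover have "hausdorff_measure h E = (SUP \<delta>\<in>{0<..}. H \<delta>)"
    by (simp add: hausdorff_measure_def H_def)
  ultimately show ?thesis
    by simp
qed

text \<open>Hausdorff--Cantelli lemma: the tails of the sequence of balls are \<open>\<delta>\<close>-covers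
  of the limsup set with arbitrarily small \<open>h\<close>-sum.\<close>

lemma hausdorff_measure_limsup_set_eq_0:
  fixes x r :: "nat \<Rightarrow> real"
  assumes h: "gauge h" and r: "\<And>n. 0 \<le> r n" "r \<longlonglongrightarrow> 0"
    and summable: "summable (\<lambda>n. h (2 * r n))"
  shows "hausdorff_measure h (limsup_set x r) = 0"
proof (rule hausdorff_measure_eq_0I)
  fix \<delta> \<epsilon> :: real assume "0 < \<delta>" "0 < \<epsilon>"
  obtain N1 where N1: "\<And>n. N1 \<le> n \<Longrightarrow> r n < \<delta> / 2"
    using order_tendstoD(2)[OF r(2), of "\<delta> / 2"] \<open>0 < \<delta>\<close> by (auto simp: eventually_sequentially)
  obtain N2 where N2: "\<And>n. N2 \<le> n \<Longrightarrow> norm (\<Sum>i. h (2 * r (i + n))) < \<epsilon>"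
    using suminf_exist_split[OF \<open>0 < \<epsilon>\<close> summable] by blast
  define N where "N = max N1 N2"
  define U where "U i = {y \<in> torus. tdist y (x (i + N)) < r (i + N)}" for i
  have diam: "tdiam (U i) \<le> 2 * r (i + N)" for i
    using r(1) by (intro tdiam_tball_le[of _ "x (i + N)"]) (auto simp: U_def)
  have "U i \<subseteq> torus \<and> tdiam (U i) \<le> \<delta>" for i
  proof -
    have "N1 \<le> i + N"
      by (simp add: N_def)
    then show ?thesis
      using diam[of i] N1[of "i + N"] by (auto simp: U_def)
  qed
  moreover have "limsup_set x r \<subseteq> (\<Union>i. U i)"
  proof
    fix \<xi> assume "\<xi> \<in> limsup_set x r"
    then obtain n where "N \<le> n" "tdist \<xi> (x n) < r n" "\<xi> \<in> torus"
      by (auto simp: limsup_set_def infinite_nat_iff_unbounded_le)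
    then have "\<xi> \<in> U (n - N)"
      by (simp add: U_def)
    then show "\<xi> \<in> (\<Union>i. U i)" by blast
  qed
  moreover have "(\<Sum>i. ennreal (h (tdiam (U i)))) \<le> ennreal \<epsilon>"
  proof -
    have "(\<Sum>i. ennreal (h (tdiam (U i)))) \<le> (\<Sum>i. ennreal (h (2 * r (i + N))))"
      using diam by (intro suminf_le ennreal_leI gauge_mono[OF h] tdiam_nonneg) auto
    also have "\<dots> = ennreal (\<Sum>i. h (2 * r (i + N)))"
      using summable gauge_nonneg[OF h] r(1)
      by (intro suminf_ennreal2) (auto intro: summable_ignore_initial_segment)
    also have "\<dots> \<le> ennreal \<epsilon>"
      using N2[of N] by (intro ennreal_leI) (auto simp: N_def)
    finally show ?thesis .
  qed
  ultimately show "\<exists>U. (\<forall>i. U i \<subseteq> torus \<and> tdiam (U i) \<le> \<delta>) \<and> limsup_set x r \<subseteq> (\<Union>i. U i)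
      \<and> (\<Sum>i. ennreal (h (tdiam (U i)))) \<le> ennreal \<epsilon>"
    by blast
qed

lemma AE_limsup_set_inter_eq_empty:
  assumes M: "prob_space M"
    and X: "\<And>n. distributed M lborel (X n) (indicator torus :: real \<Rightarrow> ennreal)"
    and r: "\<And>n. 0 < r n \<and> r n \<le> 1"
    and G: "G \<subseteq> torus" and g: "gauge g" and P: "packing_premeasure g G < \<infinity>"
    and summable: "summable (\<lambda>n. r n / g (r n))"
  shows "AE \<omega> in M. limsup_set (\<lambda>n. X n \<omega>) r \<inter> G = {}"
proof -
  interpret prob_space M
    by (rule M)
  have r_pos: "0 < r n" and r_nonneg: "0 \<le> r n" for n
    using r[of n] by simp_all
  have "r \<longlonglongrightarrow> 0"
  proof (rule LIMSEQ_zero_of_summable_bound[OF summable, of "\<lambda>t. t / g 1"])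
    show "r n / g 1 \<le> r n / g (r n)" for n
      using r[of n] gauge_mono[OF g, of "r n" 1] gauge_pos[OF g, of "r n"] by (intro divide_left_mono) auto
    show "mono_on {0..} (\<lambda>t. t / g 1)"
      using gauge_pos[OF g, of 1] by (intro mono_onI divide_right_mono) auto
  qed (use r_nonneg gauge_pos[OF g, of 1] in auto)
  then obtain C where C: "0 \<le> C"
    and hit: "\<forall>\<^sub>F n in sequentially. prob (X n -` tnbhd G (r n) \<inter> space M) \<le> C * r n / g (r n)"
    by (rule prob_hit_tnbhd_bound[OF M X G g P r_pos])
  define B where "B n = X n -` tnbhd G (r n) \<inter> space M" for n
  have B: "B n \<in> events" for n
    unfolding B_def by (rule measurable_sets[OF distributed_measurable[OF X]]) (simp add: open_tnbhd)
  have "summable (\<lambda>n. prob (B n))"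
    by (rule summable_comparison_test_ev[OF _ summable_mult[OF summable, of C]])
      (use hit in \<open>simp add: B_def\<close>)
  then have "AE \<omega> in M. \<forall>\<^sub>F n in sequentially. \<omega> \<in> space M - B n"
    using B by (intro borel_cantelli_AE1) (auto simp: emeasure_eq_measure)
  then show ?thesis
  proof eventually_elim
    case (elim \<omega>)
    then have "\<forall>\<^sub>F n in sequentially. (if X n \<omega> \<in> tnbhd G (r n) then r n else 0) \<le> 0"
      by (rule eventually_mono) (auto simp: B_def)
    then have "limsup_set (\<lambda>n. X n \<omega>) (\<lambda>n. if X n \<omega> \<in> tnbhd G (r n) then r n else 0) = {}"
      by (rule limsup_set_eq_empty)
    then show ?case
      using limsup_set_inter_subset[of "\<lambda>n. X n \<omega>" r G] by blast
  qed
qed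

lemma AE_hausdorff_measure_limsup_set_inter_eq_0:
  assumes M: "prob_space M"
    and X: "\<And>n. distributed M lborel (X n) (indicator torus :: real \<Rightarrow> ennreal)"
    and r: "\<And>n. 0 < r n \<and> r n \<le> 1"
    and G: "G \<subseteq> torus" and g: "gauge g" and P: "packing_premeasure g G < \<infinity>"
    and h: "gauge h" "doubling h" and summable: "summable (\<lambda>n. h (r n) * r n / g (r n))"
  shows "AE \<omega> in M. hausdorff_measure h (limsup_set (\<lambda>n. X n \<omega>) r \<inter> G) = 0"
proof -
  interpret prob_space M
    by (rule M)
  have r_pos: "0 < r n" and r_nonneg: "0 \<le> r n" for n
    using r[of n] by simp_all
  have "r \<longlonglongrightarrow> 0"
  proof (rule LIMSEQ_zero_of_summable_bound[OF summable, of "\<lambda>t. h t * t / g 1"])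
    show "h (r n) * r n / g 1 \<le> h (r n) * r n / g (r n)" for n
      using r[of n] gauge_mono[OF g, of "r n" 1] gauge_pos[OF g, of "r n"] gauge_nonneg[OF h(1), of "r n"]
      by (intro divide_left_mono) auto
    show "mono_on {0..} (\<lambda>t. h t * t / g 1)"
      using gauge_pos[OF g, of 1] gauge_mono[OF h(1)] gauge_nonneg[OF h(1)]
      by (intro mono_onI divide_right_mono mult_mono) auto
  qed (use r_nonneg gauge_pos[OF g, of 1] gauge_pos[OF h(1)] in auto)
  then obtain C where C: "0 \<le> C"
    and hit: "\<forall>\<^sub>F n in sequentially. prob (X n -` tnbhd G (r n) \<inter> space M) \<le> C * r n / g (r n)"
    by (rule prob_hit_tnbhd_bound[OF M X G g P r_pos])
  obtain D where D: "0 < D" "\<And>t. 0 < t \<Longrightarrow> h (2 * t) \<le> D * h t"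
    using h(2) by (auto simp: doubling_def)
  define B where "B n = X n -` tnbhd G (r n) \<inter> space M" for n
  have B: "B n \<in> events" for n
    unfolding B_def by (rule measurable_sets[OF distributed_measurable[OF X]]) (simp add: open_tnbhd)
  have h2r: "0 \<le> h (2 * r n)" for n
    using gauge_nonneg[OF h(1)] r[of n] by simp
  have "summable (\<lambda>n. prob (B n) * h (2 * r n))"
  proof (rule summable_comparison_test_ev[OF _ summable_mult[OF summable, of "C * D"]])
    show "\<forall>\<^sub>F n in sequentially. norm (prob (B n) * h (2 * r n)) \<le> C * D * (h (r n) * r n / g (r n))"
      using hit
    proof eventually_elim
      case (elim n)
      have "prob (B n) * h (2 * r n) \<le> C * r n / g (r n) * (D * h (r n))"
        using elim D(2)[of "r n"] r[of n] C gauge_pos[OF g, of "r n"] h2r[of n]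
        by (intro mult_mono) (auto simp: B_def)
      then show ?case
        using h2r[of n] by (simp add: field_simps)
    qed
  qed
  then have "AE \<omega> in M. summable (\<lambda>n. indicator (B n) \<omega> * h (2 * r n))"
    by (rule AE_summable_indicator_mult[OF B h2r])
  with AE_space show ?thesis
  proof eventually_elim
    case (elim \<omega>)
    define \<rho> where "\<rho> n = (if X n \<omega> \<in> tnbhd G (r n) then r n else 0)" for n
    have \<rho>: "\<rho> n = indicator (B n) \<omega> * r n" for n
      using elim by (simp add: \<rho>_def B_def indicator_def)
    have "\<rho> \<longlonglongrightarrow> 0"
      using \<open>r \<longlonglongrightarrow> 0\<close> by (intro tendsto_sandwich[of "\<lambda>_. 0" \<rho> _ r]) (simp_all add: \<rho>_def r_nonneg)
    moreover have "h (2 * \<rho> n) = indicator (B n) \<omega> * h (2 * r n)" for n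
      using h(1) by (simp add: \<rho> indicator_def gauge_def)
    ultimately have "hausdorff_measure h (limsup_set (\<lambda>n. X n \<omega>) \<rho>) = 0"
      using elim r_nonneg by (intro hausdorff_measure_limsup_set_eq_0[OF h(1)]) (auto simp: \<rho>_def)
    moreover have "limsup_set (\<lambda>n. X n \<omega>) r \<inter> G \<subseteq> limsup_set (\<lambda>n. X n \<omega>) \<rho>"
      unfolding \<rho>_def by (rule limsup_set_inter_subset)
    ultimately show ?case
      using hausdorff_measure_mono[of _ _ h] by (metis le_zero_eq)
  qed
qed

theorem theorem3p1:
  fixes M :: "'a measure" and X :: "nat \<Rightarrow> 'a \<Rightarrow> real" and r :: "nat \<Rightarrow> real"
    and G :: "real set" and g :: "real \<Rightarrow> real"
  assumes "prob_space M"
    and "\<And>n. distributed M lborel (X n) (indicator torus :: real \<Rightarrow> ennreal)"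
    and "\<And>n. 0 < r n \<and> r n \<le> 1"
    and "G \<noteq> {}" and "torus_compact G"
    and "gauge g" and "doubling g"
    and "packing_premeasure g G < \<infinity>"
  shows "(summable (\<lambda>n. r n / g (r n)) \<longrightarrow>
            (AE \<omega> in M. limsup_set (\<lambda>n. X n \<omega>) r \<inter> G = {}))
       \<and> (\<forall>h. gauge h \<and> doubling h \<and> summable (\<lambda>n. h (r n) * r n / g (r n)) \<longrightarrow>
            (AE \<omega> in M. hausdorff_measure h (limsup_set (\<lambda>n. X n \<omega>) r \<inter> G) = 0))"
proof -
  have G: "G \<subseteq> torus"
    using \<open>torus_compact G\<close> by (simp add: torus_compact_def)
  show ?thesis
  proof (intro conjI impI allI)
    show "AE \<omega> in M. limsup_set (\<lambda>n. X n \<omega>) r \<inter> G = {}" if "summable (\<lambda>n. r n / g (r n))"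
      using AE_limsup_set_inter_eq_empty[where X = X and r = r, OF assms(1-3) G assms(6,8) that] .
    show "AE \<omega> in M. hausdorff_measure h (limsup_set (\<lambda>n. X n \<omega>) r \<inter> G) = 0"
      if "gauge h \<and> doubling h \<and> summable (\<lambda>n. h (r n) * r n / g (r n))" for h
      using that AE_hausdorff_measure_limsup_set_inter_eq_0[where X = X and r = r, OF assms(1-3) G assms(6,8)]
      by blast
  qed
qed

end
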